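(* Let $G$, $w$, $\nu$ be as in the context. Let $\widehat{\mathcal{S}}=(S_m)_{m=0,\ldots,n}$, $n\ge1$, be a finite sequence of pairwise disjoint subsets of $V(G)$ with $\widehat{K}_m>0$ and $\widehat{D}_m>0$ for all $m=0,\ldots,n-1$. Then for all $1\le p<\infty$ and all $f\in\ell^p_\nu(G)$ with $f|_{V(G)\setminus S_0}=0$, \[ \|f|_{S_0}\|_{p,\nu}\le\frac{\hat\delta_{\widehat{\mathcal{S}},p}}{\hat a_{\widehat{\mathcal{S}},p}-1}\|\nabla_w f\|_p. \]
   Context: $G$ is an undirected weighted graph: $V(G)$ is a (countable) vertex set and $w:V(G)\times V(G)\to[0,\infty)$ is symmetric with $w(u,u)=0$. $\nu:V(G)\to(0,\infty)$ is a fixed vertex weight; $\|f\|_{p,\nu}=\left(\sum_v|f(v)|^p\nu(v)\right)^{1/p}$, $\|f|_A\|_{p,\nu}$ the same sum over $v\in A$. $\|\nabla_w f\|_p=\left(\sum_{u,v\in V(G)}|f(u)-f(v)|^pw(u,v)\right)^{1/p}$. $w_A(v)=\sum_{u\in A}w(u,v)$. For $0\le m<n$: $\widehat{K}_m=\inf_{v\in S_m}\frac{w_{S_{m+1}}(v)}{\nu(v)}$, $\widehat{D}_m=\sup_{v\in S_{m+1}}\frac{w_{S_m}(v)}{\nu(v)}$; $\hat a_{\widehat{\mathcal{S}},p}=\left(\sum_{m=0}^n\prod_{j=0}^{m-1}\frac{\widehat{K}_j}{\widehat{D}_j}\right)^{1/p}$; $\hat\delta_{\widehat{\mathcal{S}},p}=\max_{k=0,\ldots,n-1}\frac{1}{\widehat{K}_k}\sum_{m=k}^n\prod_{i=k}^{m-1}\frac{\widehat{K}_i}{\widehat{D}_i}$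 for $p=1$, and $\hat\delta_{\widehat{\mathcal{S}},p}=\left(\sum_{m=1}^n\left(\sum_{k=0}^{m-1}\widehat{K}_k^{-q/p}\left(\prod_{i=k}^{m-1}\frac{\widehat{K}_i}{\widehat{D}_i}\right)^{q/p}\right)^{p/q}\right)^{1/p}$ for $1<p<\infty$, $1/p+1/q=1$. Empty products equal $1$, empty sums equal $0$. *)

theory Defs
  imports "HOL-Analysis.Analysis" "HOL-Library.Extended_Nonnegative_Real"
begin

text \<open>Vertex set V(G) is the (countable) type 'v. Edge weights may sum to
infinity, so vertex/edge-weight sums are taken in ennreal.\<close>

definition wA :: "('v \<Rightarrow> 'v \<Rightarrow> real) \<Rightarrow> 'v set \<Rightarrow> 'v \<Rightarrow> ennreal" where
  "wA w A v = (\<Sum>\<^sub>\<infinity>u\<in>A. ennreal (w u v))"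

definition Khat :: "('v \<Rightarrow> 'v \<Rightarrow> real) \<Rightarrow> ('v \<Rightarrow> real) \<Rightarrow> (nat \<Rightarrow> 'v set) \<Rightarrow> nat \<Rightarrow> ennreal" where
  "Khat w \<nu> S m = (INF v\<in>S m. wA w (S (Suc m)) v / ennreal (\<nu> v))"

definition Dhat :: "('v \<Rightarrow> 'v \<Rightarrow> real) \<Rightarrow> ('v \<Rightarrow> real) \<Rightarrow> (nat \<Rightarrow> 'v set) \<Rightarrow> nat \<Rightarrow> ennreal" where
  "Dhat w \<nu> S m = (SUP v\<in>S (Suc m). wA w (S m) v / ennreal (\<nu> v))"

text \<open>Real-valued versions (used under the hypothesis 0 < Khat, Dhat < \<infinity>).\<close>
definition Kr where "Kr w \<nu> S m = enn2real (Khat w \<nu> S m)"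
definition Dr where "Dr w \<nu> S m = enn2real (Dhat w \<nu> S m)"

definition a_hat :: "('v \<Rightarrow> 'v \<Rightarrow> real) \<Rightarrow> ('v \<Rightarrow> real) \<Rightarrow> (nat \<Rightarrow> 'v set) \<Rightarrow> nat \<Rightarrow> real \<Rightarrow> real" where
  "a_hat w \<nu> S n p =
     (\<Sum>m=0..n. \<Prod>j<m. Kr w \<nu> S j / Dr w \<nu> S j) powr (1 / p)"

definition delta_hat :: "('v \<Rightarrow> 'v \<Rightarrow> real) \<Rightarrow> ('v \<Rightarrow> real) \<Rightarrow> (nat \<Rightarrow> 'v set) \<Rightarrow> nat \<Rightarrow> real \<Rightarrow> real" where
  "delta_hat w \<nu> S n p =
    (if p = 1 then
       Max ((\<lambda>k. (1 / Kr w \<nu> S k) *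
              (\<Sum>m=k..n. \<Prod>i=k..<m. Kr w \<nu> S i / Dr w \<nu> S i)) ` {0..<n})
     else
       (let q = p / (p - 1) in
        (\<Sum>m=1..n.
           (\<Sum>k=0..<m. (Kr w \<nu> S k) powr (- q / p) *
               (\<Prod>i=k..<m. Kr w \<nu> S i / Dr w \<nu> S i) powr (q / p)) powr (p / q))
        powr (1 / p)))"

text \<open>\<open>\<parallel>f|_A\<parallel>_{p,\<nu>}\<close> (for f in l^p_\<nu>, so the sum is a finite real).\<close>
definition restr_pnorm :: "('v \<Rightarrow> real) \<Rightarrow> real \<Rightarrow> 'v set \<Rightarrow> ('v \<Rightarrow> real) \<Rightarrow> real" where
  "restr_pnorm \<nu> p A f = (\<Sum>\<^sub>\<infinity>v\<in>A. \<bar>f v\<bar> powr p * \<nu> v) powr (1 / p)"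

definition grad_pnorm :: "('v \<Rightarrow> 'v \<Rightarrow> real) \<Rightarrow> real \<Rightarrow> ('v \<Rightarrow> real) \<Rightarrow> ennreal" where
  "grad_pnorm w p f =
     (let G = (\<Sum>\<^sub>\<infinity>(u,v)\<in>UNIV. ennreal (\<bar>f u - f v\<bar> powr p * w u v))
      in if G = top then top else ennreal (enn2real G powr (1 / p)))"

end

theory Submission
  imports Defs
begin

text \<open>Since \<open>f\<close> vanishes outside \<open>S_0\<close>, every edge from \<open>u \<in> S_0\<close> to \<open>S_1\<close> contributes
  \<open>|f u|^p w(u,v)\<close> to \<open>\<parallel>\<nabla>_w f\<parallel>_p^p\<close>, and these contributions add up to at least
  \<open>K_0 \<nu>(u) |f u|^p\<close>; hence \<open>K_0 \<parallel>f\<parallel>^p \<le> \<parallel>\<nabla>_w f\<parallel>^p\<close>. For the constants, put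
  \<open>P_m = \<Prod>j<m. K_j / D_j\<close> and \<open>B = P_1 + \<dots> + P_n\<close>, so that \<open>a^p = 1 + B\<close>.
  Superadditivity of \<open>t \<mapsto> t^p\<close> gives \<open>a - 1 \<le> B^(1/p)\<close>, while the \<open>k = 0\<close> terms of
  \<open>\<delta>\<close> alone give \<open>\<delta> \<ge> K_0^(-1/p) B^(1/p)\<close>; so \<open>K_0^(-1/p) \<le> \<delta> / (a - 1)\<close>.\<close>

lemma sum_SUP_directed_ennreal:
  fixes g :: "'a \<Rightarrow> 'b \<Rightarrow> ennreal"
  assumes "finite F" and "I \<noteq> {}"
    and directed: "\<And>i j. i \<in> I \<Longrightarrow> j \<in> I \<Longrightarrow> \<exists>k\<in>I. \<forall>u. g u i \<le> g u k \<and> g u j \<le> g u k"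
  shows "(\<Sum>u\<in>F. SUP i\<in>I. g u i) = (SUP i\<in>I. \<Sum>u\<in>F. g u i)"
  using \<open>finite F\<close>
proof (induction F rule: finite_induct)
  case empty
  then show ?case using \<open>I \<noteq> {}\<close> by simp
next
  case (insert a F)
  have "(\<Sum>u\<in>insert a F. SUP i\<in>I. g u i) = (SUP i\<in>I. g a i) + (SUP i\<in>I. \<Sum>u\<in>F. g u i)"
    using insert by simp
  also have "\<dots> = (SUP i\<in>I. g a i + (\<Sum>u\<in>F. g u i))"
  proof (rule SUP_add_directed_ennreal[symmetric])
    fix i j assume "i \<in> I" "j \<in> I"
    with directed obtain k where "k \<in> I" "\<And>u. g u i \<le> g u k \<and> g u j \<le> g u k" by blast
    then show "\<exists>k\<in>I. g a i + (\<Sum>u\<in>F. g u j) \<le> g a k + (\<Sum>u\<in>F. g u k)"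
      by (intro bexI[of _ k] add_mono sum_mono) auto
  qed
  also have "\<dots> = (SUP i\<in>I. \<Sum>u\<in>insert a F. g u i)"
    using insert by simp
  finally show ?case .
qed

lemma powr_add_le_powr_sum:
  fixes a b p :: real
  assumes "0 \<le> a" "0 \<le> b" "1 \<le> p"
  shows "a powr p + b powr p \<le> (a + b) powr p"
proof (cases "a + b = 0")
  case True
  with assms have "a = 0" "b = 0" by auto
  then show ?thesis by simp
next
  case False
  with assms have ab: "0 < a + b" by simp
  have le: "s powr p \<le> s" if "0 \<le> s" "s \<le> 1" for s
    using powr_mono'[of 1 p s] that assms by simp
  have "(a / (a + b)) powr p \<le> a / (a + b)" "(b / (a + b)) powr p \<le> b / (a + b)"
    using assms ab by (auto intro!: le)
  moreover have "a / (a + b) + b / (a + b) = 1"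
    using ab by (simp add: add_divide_distrib[symmetric])
  ultimately have "(a / (a + b)) powr p + (b / (a + b)) powr p \<le> 1"
    by linarith
  with assms ab show ?thesis
    by (simp add: powr_divide add_divide_distrib[symmetric] divide_le_eq)
qed

definition ratio_prod :: "('v \<Rightarrow> 'v \<Rightarrow> real) \<Rightarrow> ('v \<Rightarrow> real) \<Rightarrow> (nat \<Rightarrow> 'v set) \<Rightarrow> nat \<Rightarrow> real" where
  "ratio_prod w \<nu> S m = (\<Prod>j<m. Kr w \<nu> S j / Dr w \<nu> S j)"

lemma ratio_prod_pos:
  assumes pos: "\<And>j. j < n \<Longrightarrow> 0 < Kr w \<nu> S j \<and> 0 < Dr w \<nu> S j" and "m \<le> n"
  shows "0 < ratio_prod w \<nu> S m"
  unfolding ratio_prod_def using assms by (intro prod_pos) auto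

lemma a_hat_eq:
  "a_hat w \<nu> S n p = (1 + (\<Sum>m=1..n. ratio_prod w \<nu> S m)) powr (1 / p)"
  by (simp add: a_hat_def ratio_prod_def sum.atLeast_Suc_atMost)

lemma a_hat_gt_one:
  assumes pos: "\<And>j. j < n \<Longrightarrow> 0 < Kr w \<nu> S j \<and> 0 < Dr w \<nu> S j"
    and "1 \<le> n" "0 < p"
  shows "1 < a_hat w \<nu> S n p"
proof -
  have "0 < ratio_prod w \<nu> S m" if "m \<le> n" for m
    using ratio_prod_pos[OF pos that] .
  then have "0 < (\<Sum>m=1..n. ratio_prod w \<nu> S m)"
    using \<open>1 \<le> n\<close> by (intro sum_pos) auto
  with \<open>0 < p\<close> show ?thesis
    unfolding a_hat_eq by (intro gr_one_powr) auto
qed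

lemma a_hat_minus_one_le:
  assumes pos: "\<And>j. j < n \<Longrightarrow> 0 < Kr w \<nu> S j \<and> 0 < Dr w \<nu> S j"
    and "1 \<le> n" "1 \<le> p"
  shows "a_hat w \<nu> S n p - 1 \<le> (\<Sum>m=1..n. ratio_prod w \<nu> S m) powr (1 / p)"
proof -
  define a B where "a = a_hat w \<nu> S n p" and "B = (\<Sum>m=1..n. ratio_prod w \<nu> S m)"
  have "0 \<le> B"
    unfolding B_def using ratio_prod_pos[OF pos] by (intro sum_nonneg less_imp_le) auto
  have "1 < a" unfolding a_def using assms by (intro a_hat_gt_one) auto
  have "(a - 1) powr p + 1 powr p \<le> (a - 1 + 1) powr p"
    using \<open>1 < a\<close> \<open>1 \<le> p\<close> by (intro powr_add_le_powr_sum) auto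
  also have "\<dots> = 1 + B"
    using \<open>0 \<le> B\<close> \<open>1 \<le> p\<close> by (simp add: a_def B_def a_hat_eq powr_powr)
  finally have "(a - 1) powr p \<le> B" by simp
  then have "((a - 1) powr p) powr (1 / p) \<le> B powr (1 / p)"
    using \<open>1 < a\<close> \<open>1 \<le> p\<close> by (intro powr_mono2) auto
  with \<open>1 < a\<close> \<open>1 \<le> p\<close> show ?thesis by (simp add: a_def B_def powr_powr)
qed

lemma delta_hat_ge:
  assumes pos: "\<And>j. j < n \<Longrightarrow> 0 < Kr w \<nu> S j \<and> 0 < Dr w \<nu> S j"
    and "1 \<le> n" "1 \<le> p"
  shows "Kr w \<nu> S 0 powr (-1 / p) * (\<Sum>m=1..n. ratio_prod w \<nu> S m) powr (1 / p)
           \<le> delta_hat w \<nu> S n p"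
proof -
  define K0 B where "K0 = Kr w \<nu> S 0" and "B = (\<Sum>m=1..n. ratio_prod w \<nu> S m)"
  have P: "(\<Prod>i=0..<m. Kr w \<nu> S i / Dr w \<nu> S i) = ratio_prod w \<nu> S m" for m
    by (simp add: ratio_prod_def atLeast0LessThan)
  have "0 < K0" unfolding K0_def using pos \<open>1 \<le> n\<close> by simp
  have P_pos: "0 < ratio_prod w \<nu> S m" if "m \<le> n" for m
    using ratio_prod_pos[OF pos that] .
  have "0 < B" unfolding B_def using P_pos \<open>1 \<le> n\<close> by (intro sum_pos) auto
  show ?thesis
  proof (cases "p = 1")
    case True
    have "(1 / K0) * (1 + B) \<le> Max ((\<lambda>k. (1 / Kr w \<nu> S k) *
              (\<Sum>m=k..n. \<Prod>i=k..<m. Kr w \<nu> S i / Dr w \<nu> S i)) ` {0..<n})"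
      using \<open>1 \<le> n\<close>
      by (intro Max_ge) (auto simp: K0_def B_def P sum.atLeast_Suc_atMost ratio_prod_def
                               image_iff intro!: bexI[of _ 0])
    then have "(1 + B) / K0 \<le> delta_hat w \<nu> S n p"
      using True by (simp add: delta_hat_def K0_def)
    moreover have "K0 powr (-1 / p) * B powr (1 / p) = B / K0"
      using True \<open>0 < K0\<close> \<open>0 < B\<close> by (simp add: powr_minus divide_inverse)
    moreover have "B / K0 \<le> (1 + B) / K0"
      using \<open>0 < K0\<close> by (simp add: divide_right_mono)
    ultimately show ?thesis by (simp add: K0_def B_def)
  next
    case False
    with \<open>1 \<le> p\<close> have "1 < p" by simp
    define q where "q = p / (p - 1)"
    have "0 < q" using \<open>1 < p\<close> by (simp add: q_def)
    define inner where "inner m = (\<Sum>k=0..<m. Kr w \<nu> S k powr (- q / p) *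
               (\<Prod>i=k..<m. Kr w \<nu> S i / Dr w \<nu> S i) powr (q / p))" for m
    have delta: "delta_hat w \<nu> S n p = (\<Sum>m=1..n. inner m powr (p / q)) powr (1 / p)"
      using False by (simp add: delta_hat_def inner_def q_def Let_def)
    have inner_ge: "K0 powr (-1) * ratio_prod w \<nu> S m \<le> inner m powr (p / q)"
      if "1 \<le> m" "m \<le> n" for m
    proof -
      have "K0 powr (- q / p) * ratio_prod w \<nu> S m powr (q / p) \<le> inner m"
        unfolding inner_def K0_def using that
        by (subst P[symmetric], intro member_le_sum) auto
      then have "(K0 powr (- q / p) * ratio_prod w \<nu> S m powr (q / p)) powr (p / q)
                   \<le> inner m powr (p / q)"
        using \<open>0 < q\<close> \<open>1 < p\<close> by (intro powr_mono2) auto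
      then show ?thesis
        using \<open>0 < K0\<close> P_pos[OF \<open>m \<le> n\<close>] \<open>0 < q\<close> \<open>1 < p\<close> by (simp add: powr_mult powr_powr)
    qed
    have "K0 powr (-1) * B \<le> (\<Sum>m=1..n. inner m powr (p / q))"
      unfolding B_def sum_distrib_left using inner_ge by (intro sum_mono) auto
    then have "(K0 powr (-1) * B) powr (1 / p) \<le> delta_hat w \<nu> S n p"
      unfolding delta using \<open>0 < K0\<close> \<open>0 < B\<close> \<open>1 < p\<close> by (intro powr_mono2) auto
    moreover have "(K0 powr (-1) * B) powr (1 / p) = K0 powr (-1 / p) * B powr (1 / p)"
      using \<open>0 < K0\<close> \<open>0 < B\<close>
      by (subst powr_mult) (auto simp: powr_powr powr_divide powr_minus_divide)
    ultimately show ?thesis by (simp add: K0_def B_def)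
  qed
qed

lemma Kr_powr_le_constant:
  assumes pos: "\<And>j. j < n \<Longrightarrow> 0 < Kr w \<nu> S j \<and> 0 < Dr w \<nu> S j"
    and "1 \<le> n" "1 \<le> p"
  shows "Kr w \<nu> S 0 powr (-1 / p) \<le> delta_hat w \<nu> S n p / (a_hat w \<nu> S n p - 1)"
proof -
  define c B where "c = Kr w \<nu> S 0 powr (-1 / p)" and "B = (\<Sum>m=1..n. ratio_prod w \<nu> S m)"
  have a1: "0 < a_hat w \<nu> S n p - 1" using a_hat_gt_one[OF pos] assms by simp
  have "c * (a_hat w \<nu> S n p - 1) \<le> c * B powr (1 / p)"
    unfolding c_def B_def using a_hat_minus_one_le[OF pos assms(2,3)] by (intro mult_left_mono) auto
  also have "\<dots> \<le> delta_hat w \<nu> S n p"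
    unfolding c_def B_def by (rule delta_hat_ge[OF pos assms(2,3)])
  finally show ?thesis using a1 unfolding c_def by (simp add: pos_le_divide_eq)
qed

definition dirichlet_energy :: "('v \<Rightarrow> 'v \<Rightarrow> real) \<Rightarrow> real \<Rightarrow> ('v \<Rightarrow> real) \<Rightarrow> ennreal" where
  "dirichlet_energy w p f = (\<Sum>\<^sub>\<infinity>(u, v)\<in>UNIV. ennreal (\<bar>f u - f v\<bar> powr p * w u v))"

lemma sum_le_dirichlet_energy:
  assumes "finite X"
  shows "(\<Sum>(u, v)\<in>X. ennreal (\<bar>f u - f v\<bar> powr p * w u v)) \<le> dirichlet_energy w p f"
  unfolding dirichlet_energy_def using assms
  by (subst nonneg_infsum_complete) (auto intro!: SUP_upper2[of X])

lemma dirichlet_energy_ge_cut_sum: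
  fixes w :: "'v \<Rightarrow> 'v \<Rightarrow> real"
  assumes w_nonneg: "\<And>u v. 0 \<le> w u v" and w_sym: "\<And>u v. w u v = w v u"
    and vanish: "\<And>v. v \<in> B \<Longrightarrow> f v = 0" and "finite F"
  shows "(\<Sum>u\<in>F. ennreal (\<bar>f u\<bar> powr p) * wA w B u) \<le> dirichlet_energy w p f"
proof -
  define I where "I = {T. finite T \<and> T \<subseteq> B}"
  define g where "g u T = ennreal (\<bar>f u\<bar> powr p) * (\<Sum>v\<in>T. ennreal (w v u))" for u T
  have "ennreal (\<bar>f u\<bar> powr p) * wA w B u = (SUP T\<in>I. g u T)" for u
    unfolding wA_def g_def I_def
    by (subst nonneg_infsum_complete) (auto simp: SUP_mult_left_ennreal image_image)
  then have "(\<Sum>u\<in>F. ennreal (\<bar>f u\<bar> powr p) * wA w B u) = (\<Sum>u\<in>F. SUP T\<in>I. g u T)"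
    by simp
  also have "\<dots> = (SUP T\<in>I. \<Sum>u\<in>F. g u T)"
  proof (rule sum_SUP_directed_ennreal)
    fix i j assume "i \<in> I" "j \<in> I"
    then show "\<exists>k\<in>I. \<forall>u. g u i \<le> g u k \<and> g u j \<le> g u k"
      unfolding I_def g_def by (intro bexI[of _ "i \<union> j"]) (auto intro!: mult_left_mono sum_mono2)
  qed (use \<open>finite F\<close> I_def in auto)
  also have "\<dots> \<le> dirichlet_energy w p f"
  proof (rule SUP_least)
    fix T assume "T \<in> I"
    have "(\<Sum>u\<in>F. g u T) = (\<Sum>(u, v)\<in>F \<times> T. ennreal (\<bar>f u - f v\<bar> powr p * w u v))"
      unfolding g_def sum_distrib_left sum.cartesian_product[symmetric]
    proof (intro sum.cong refl)
      fix u v assume "v \<in> T"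
      then have "f v = 0" using \<open>T \<in> I\<close> vanish unfolding I_def by auto
      then show "ennreal (\<bar>f u\<bar> powr p) * ennreal (w v u) = ennreal (\<bar>f u - f v\<bar> powr p * w u v)"
        using w_nonneg[of v u] by (simp add: ennreal_mult'' w_sym[of v u])
    qed
    also have "\<dots> \<le> dirichlet_energy w p f"
      using \<open>T \<in> I\<close> \<open>finite F\<close> unfolding I_def by (intro sum_le_dirichlet_energy) auto
    finally show "(\<Sum>u\<in>F. g u T) \<le> dirichlet_energy w p f" .
  qed
  finally show ?thesis .
qed

lemma dirichlet_energy_ge_weighted_norm:
  fixes w :: "'v \<Rightarrow> 'v \<Rightarrow> real"
  assumes w_nonneg: "\<And>u v. 0 \<le> w u v" and w_sym: "\<And>u v. w u v = w v u"
    and \<nu>_nonneg: "\<And>v. v \<in> A \<Longrightarrow> 0 \<le> \<nu> v"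
    and vanish: "\<And>v. v \<in> B \<Longrightarrow> f v = 0"
    and summable: "(\<lambda>v. \<bar>f v\<bar> powr p * \<nu> v) summable_on A"
    and K_le: "\<And>u. u \<in> A \<Longrightarrow> K * ennreal (\<nu> u) \<le> wA w B u"
  shows "K * ennreal (\<Sum>\<^sub>\<infinity>v\<in>A. \<bar>f v\<bar> powr p * \<nu> v) \<le> dirichlet_energy w p f"
proof -
  have "K * ennreal (\<Sum>\<^sub>\<infinity>v\<in>A. \<bar>f v\<bar> powr p * \<nu> v)
      = (SUP F\<in>{F. finite F \<and> F \<subseteq> A}. K * ennreal (\<Sum>u\<in>F. \<bar>f u\<bar> powr p * \<nu> u))"
    using summable \<nu>_nonneg
    by (subst infsum_nonneg_is_SUPREMUM_ennreal) (auto simp: SUP_mult_left_ennreal image_image)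
  also have "\<dots> \<le> dirichlet_energy w p f"
  proof (rule SUP_least)
    fix F assume F: "F \<in> {F. finite F \<and> F \<subseteq> A}"
    then have "K * ennreal (\<Sum>u\<in>F. \<bar>f u\<bar> powr p * \<nu> u)
        = K * (\<Sum>u\<in>F. ennreal (\<bar>f u\<bar> powr p) * ennreal (\<nu> u))"
      using \<nu>_nonneg by (subst sum_ennreal[symmetric]) (auto simp: ennreal_mult')
    also have "\<dots> = (\<Sum>u\<in>F. ennreal (\<bar>f u\<bar> powr p) * (K * ennreal (\<nu> u)))"
      by (simp add: sum_distrib_left ac_simps)
    also have "\<dots> \<le> (\<Sum>u\<in>F. ennreal (\<bar>f u\<bar> powr p) * wA w B u)"
      using F K_le by (intro sum_mono mult_left_mono) auto
    also have "\<dots> \<le> dirichlet_energy w p f"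
      using F by (intro dirichlet_energy_ge_cut_sum w_nonneg w_sym vanish) auto
    finally show "K * ennreal (\<Sum>u\<in>F. \<bar>f u\<bar> powr p * \<nu> u) \<le> dirichlet_energy w p f" .
  qed
  finally show ?thesis .
qed

lemma Khat_mult_le_wA:
  assumes "u \<in> S m" "0 < \<nu> u"
  shows "Khat w \<nu> S m * ennreal (\<nu> u) \<le> wA w (S (Suc m)) u"
proof -
  have "Khat w \<nu> S m \<le> wA w (S (Suc m)) u / ennreal (\<nu> u)"
    unfolding Khat_def using assms(1) by (rule INF_lower)
  then have "Khat w \<nu> S m * ennreal (\<nu> u) \<le> wA w (S (Suc m)) u / ennreal (\<nu> u) * ennreal (\<nu> u)"
    by (rule mult_right_mono) simp
  also have "\<dots> = wA w (S (Suc m)) u"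
    using assms(2) by (simp add: ennreal_divide_times ennreal_divide_self)
  finally show ?thesis .
qed

lemma restr_pnorm_le_grad_pnorm:
  assumes "0 < K" "0 < p" and \<nu>_nonneg: "\<And>v. v \<in> A \<Longrightarrow> 0 \<le> \<nu> v"
    and energy: "ennreal K * ennreal (\<Sum>\<^sub>\<infinity>v\<in>A. \<bar>f v\<bar> powr p * \<nu> v) \<le> dirichlet_energy w p f"
  shows "ennreal (restr_pnorm \<nu> p A f) \<le> ennreal (K powr (-1 / p)) * grad_pnorm w p f"
proof (cases "dirichlet_energy w p f = top")
  case True
  with \<open>0 < K\<close> show ?thesis
    by (simp add: grad_pnorm_def dirichlet_energy_def[symmetric] ennreal_mult_top)
next
  case False
  define N g where "N = (\<Sum>\<^sub>\<infinity>v\<in>A. \<bar>f v\<bar> powr p * \<nu> v)" and "g = enn2real (dirichlet_energy w p f)"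
  have "0 \<le> N" unfolding N_def using \<nu>_nonneg by (intro infsum_nonneg) auto
  have "0 \<le> g" unfolding g_def by simp
  have "ennreal (K * N) \<le> ennreal g"
    using energy False \<open>0 < K\<close> \<open>0 \<le> N\<close>
    by (simp add: N_def g_def ennreal_mult less_top ennreal_enn2real_if)
  then have "N \<le> g / K" using \<open>0 < K\<close> \<open>0 \<le> g\<close> by (simp add: ennreal_le_iff field_simps)
  then have "N powr (1 / p) \<le> (g / K) powr (1 / p)" using \<open>0 \<le> N\<close> \<open>0 < p\<close> by (intro powr_mono2) auto
  also have "\<dots> = K powr (-1 / p) * g powr (1 / p)"
    using \<open>0 < K\<close> \<open>0 \<le> g\<close> by (simp add: powr_divide powr_minus_divide)
  finally have "ennreal (N powr (1 / p)) \<le> ennreal (K powr (-1 / p)) * ennreal (g powr (1 / p))"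
    by (simp add: ennreal_mult[symmetric] ennreal_leI)
  then show ?thesis
    using False by (simp add: restr_pnorm_def grad_pnorm_def dirichlet_energy_def[symmetric] N_def g_def)
qed

theorem corollary1p6:
  fixes w :: "'v::countable \<Rightarrow> 'v \<Rightarrow> real" and \<nu> :: "'v \<Rightarrow> real"
    and S :: "nat \<Rightarrow> 'v set" and n :: nat and p :: real and f :: "'v \<Rightarrow> real"
  assumes w_nonneg: "\<And>u v. w u v \<ge> 0"
    and w_sym: "\<And>u v. w u v = w v u"
    and w_diag: "\<And>u. w u u = 0"
    and \<nu>_pos: "\<And>v. \<nu> v > 0"
    and n: "n \<ge> 1"
    and disj: "\<And>i j. i \<le> n \<Longrightarrow> j \<le> n \<Longrightarrow> i \<noteq> j \<Longrightarrow> S i \<inter> S j = {}"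
    and K_pos: "\<And>m. m < n \<Longrightarrow> 0 < Khat w \<nu> S m \<and> Khat w \<nu> S m < top"
    and D_pos: "\<And>m. m < n \<Longrightarrow> 0 < Dhat w \<nu> S m \<and> Dhat w \<nu> S m < top"
    and p: "1 \<le> p"
    and f_lp: "(\<lambda>v. \<bar>f v\<bar> powr p * \<nu> v) summable_on UNIV"
    and f_supp: "\<And>v. v \<notin> S 0 \<Longrightarrow> f v = 0"
  shows "ennreal (restr_pnorm \<nu> p (S 0) f)
           \<le> ennreal (delta_hat w \<nu> S n p / (a_hat w \<nu> S n p - 1)) * grad_pnorm w p f"
proof -
  have pos: "\<And>m. m < n \<Longrightarrow> 0 < Kr w \<nu> S m \<and> 0 < Dr w \<nu> S m"
    unfolding Kr_def Dr_def using K_pos D_pos by (simp add: enn2real_positive_iff)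
  have K0: "Khat w \<nu> S 0 = ennreal (Kr w \<nu> S 0)"
    unfolding Kr_def using K_pos n by simp
  have "f v = 0" if "v \<in> S 1" for v
    using that disj[of 0 1] n by (intro f_supp) auto
  moreover have "(\<lambda>v. \<bar>f v\<bar> powr p * \<nu> v) summable_on S 0"
    using f_lp by (rule summable_on_subset_banach) simp
  moreover have "Khat w \<nu> S 0 * ennreal (\<nu> u) \<le> wA w (S 1) u" if "u \<in> S 0" for u
    using Khat_mult_le_wA[of u S 0 \<nu> w] that \<nu>_pos by simp
  ultimately have "ennreal (Kr w \<nu> S 0) * ennreal (\<Sum>\<^sub>\<infinity>v\<in>S 0. \<bar>f v\<bar> powr p * \<nu> v)
      \<le> dirichlet_energy w p f"
    unfolding K0[symmetric] using less_imp_le[OF \<nu>_pos]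
    by (intro dirichlet_energy_ge_weighted_norm w_nonneg w_sym)
  then have "ennreal (restr_pnorm \<nu> p (S 0) f) \<le> ennreal (Kr w \<nu> S 0 powr (-1 / p)) * grad_pnorm w p f"
    using pos[of 0] n p less_imp_le[OF \<nu>_pos] by (intro restr_pnorm_le_grad_pnorm) auto
  also have "\<dots> \<le> ennreal (delta_hat w \<nu> S n p / (a_hat w \<nu> S n p - 1)) * grad_pnorm w p f"
    using Kr_powr_le_constant[OF pos n p] by (intro mult_right_mono ennreal_leI) auto
  finally show ?thesis .
qed

end
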